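(* Let $\mathfrak{L}$ be a class of groups closed under finite index subgroups, let $I:\mathfrak{L}\to\mathbb{R}$ be an invariant, and let $G\in\mathfrak{L}$. Define \[\tilde{I}(G)=\inf_{H\leqslant_f G}\frac{I(H)}{|G:H|},\qquad \tilde{J}(G)=\inf_{H\trianglelefteq_f G}\frac{I(H)}{|G:H|},\] where the first infimum is over all finite index subgroups $H$ of $G$ and the second over all finite index normal subgroups of $G$. If $I$ is submultiplicative with respect to finite index subgroups, then $\tilde{I}(G)=\tilde{J}(G)$. If $I$ is submultiplicative with respect to finite index normal subgroups, then $\tilde{I}(G)=\tilde{J}(G)$.
   Context: $I$ is submultiplicative with respect to finite index (resp. finite index normal) subgroups if $\frac{I(H)}{|G:H|}\le I(G)$ for every $G\in\mathfrak{L}$ and every finite index (resp. finite index normal) subgroup $H$ of $G$. $\mathfrak{L}$ closed under finite index subgroups means that if $G\in\mathfrak{L}$ and $H$ has finite index in $G$ then $H\in\mathfrak{L}$. *)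

theory Defs
  imports "HOL-Algebra.Algebra" "HOL-Library.Extended_Real"
begin

definition fin_index_subgroup :: "'a set \<Rightarrow> 'a monoid \<Rightarrow> bool" where
  "fin_index_subgroup H G \<longleftrightarrow> subgroup H G \<and> finite (rcosets\<^bsub>G\<^esub> H)"

definition fin_index_normal :: "'a set \<Rightarrow> 'a monoid \<Rightarrow> bool" where
  "fin_index_normal H G \<longleftrightarrow> normal H G \<and> finite (rcosets\<^bsub>G\<^esub> H)"

definition group_index :: "'a monoid \<Rightarrow> 'a set \<Rightarrow> nat" where
  "group_index G H = card (rcosets\<^bsub>G\<^esub> H)"

definition class_of_groups :: "('a monoid \<Rightarrow> bool) \<Rightarrow> bool" where
  "class_of_groups L \<longleftrightarrow> (\<forall>G. L G \<longrightarrow> group G)"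

definition closed_fin_index :: "('a monoid \<Rightarrow> bool) \<Rightarrow> bool" where
  "closed_fin_index L \<longleftrightarrow>
     (\<forall>G H. L G \<longrightarrow> fin_index_subgroup H G \<longrightarrow> L (G\<lparr>carrier := H\<rparr>))"

definition is_invariant :: "('a monoid \<Rightarrow> bool) \<Rightarrow> ('a monoid \<Rightarrow> real) \<Rightarrow> bool" where
  "is_invariant L I \<longleftrightarrow> (\<forall>G G'. L G \<longrightarrow> L G' \<longrightarrow> G \<cong> G' \<longrightarrow> I G = I G')"

definition submult_fin_index :: "('a monoid \<Rightarrow> bool) \<Rightarrow> ('a monoid \<Rightarrow> real) \<Rightarrow> bool" where
  "submult_fin_index L I \<longleftrightarrow>
     (\<forall>G H. L G \<longrightarrow> fin_index_subgroup H G \<longrightarrow>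
        I (G\<lparr>carrier := H\<rparr>) / real (group_index G H) \<le> I G)"

definition submult_fin_index_normal :: "('a monoid \<Rightarrow> bool) \<Rightarrow> ('a monoid \<Rightarrow> real) \<Rightarrow> bool" where
  "submult_fin_index_normal L I \<longleftrightarrow>
     (\<forall>G H. L G \<longrightarrow> fin_index_normal H G \<longrightarrow>
        I (G\<lparr>carrier := H\<rparr>) / real (group_index G H) \<le> I G)"

text \<open>The infima are taken in the extended reals (they may be -\<infinity>).\<close>
definition I_tilde :: "('a monoid \<Rightarrow> real) \<Rightarrow> 'a monoid \<Rightarrow> ereal" where
  "I_tilde I G = (INF H \<in> {H. fin_index_subgroup H G}.
      ereal (I (G\<lparr>carrier := H\<rparr>) / real (group_index G H)))"

definition J_tilde :: "('a monoid \<Rightarrow> real) \<Rightarrow> 'a monoid \<Rightarrow> ereal" where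
  "J_tilde I G = (INF H \<in> {H. fin_index_normal H G}.
      ereal (I (G\<lparr>carrier := H\<rparr>) / real (group_index G H)))"

end

theory Submission
  imports Defs
begin

text \<open>For a finite index subgroup \<open>H\<close> of \<open>G\<close>, the kernel \<open>N\<close> of the action of \<open>G\<close> on the
finitely many cosets of \<open>H\<close> (the normal core of \<open>H\<close>) is a finite index normal subgroup of \<open>G\<close>
contained in \<open>H\<close>. Since \<open>|G:N| = |G:H| |H:N|\<close>, submultiplicativity for \<open>N \<unlhd> H\<close> gives
\<open>I(N)/|G:N| \<le> I(H)/|G:H|\<close>, so restricting the infimum to normal subgroups does not increase it.
Submultiplicativity for all finite index subgroups implies the normal version.\<close>

text \<open>\<open>G\<close> acts on the right cosets by \<open>D \<mapsto> D g\<^sup>-\<^sup>1\<close>; the inverse makes this a homomorphism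
rather than an anti-homomorphism into the permutations.\<close>

definition coset_action :: "('a, 'b) monoid_scheme \<Rightarrow> 'a set \<Rightarrow> 'a \<Rightarrow> 'a set \<Rightarrow> 'a set" where
  "coset_action G H g = (\<lambda>D \<in> rcosets\<^bsub>G\<^esub> H. D #>\<^bsub>G\<^esub> inv\<^bsub>G\<^esub> g)"

lemma finite_Bij: "finite S \<Longrightarrow> finite (Bij S)"
  by (rule finite_subset[OF _ finite_PiE[of S "\<lambda>_. S"]]) (auto simp: Bij_def PiE_iff bij_betw_def extensional_def)

lemma (in group) coset_action_closed:
  assumes "subgroup H G" "g \<in> carrier G" "D \<in> rcosets H"
  shows "coset_action G H g D \<in> rcosets H"
proof -
  obtain a where a: "a \<in> carrier G" "D = H #> a" using assms(3) unfolding RCOSETS_def by auto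
  then have "D #> inv g = H #> (a \<otimes> inv g)"
    using assms by (simp add: coset_mult_assoc subgroup.subset)
  then show ?thesis using assms a by (simp add: coset_action_def rcosetsI subgroup.subset)
qed

lemma (in group) coset_action_mult:
  assumes "subgroup H G" "g \<in> carrier G" "k \<in> carrier G" "D \<in> rcosets H"
  shows "coset_action G H (g \<otimes> k) D = coset_action G H g (coset_action G H k D)"
proof -
  have "D \<subseteq> carrier G" using assms by (simp add: subgroup.rcosets_carrier is_group)
  then show ?thesis using assms coset_action_closed[OF assms(1,3,4)]
    by (simp add: coset_action_def inv_mult_group coset_mult_assoc)
qed

lemma (in group) coset_action_one:
  assumes "subgroup H G" "D \<in> rcosets H"
  shows "coset_action G H \<one> D = D"
  using assms by (simp add: coset_action_def subgroup.rcosets_carrier is_group)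

lemma (in group) coset_action_Bij:
  assumes "subgroup H G" "g \<in> carrier G"
  shows "coset_action G H g \<in> Bij (rcosets H)"
proof -
  have "bij_betw (coset_action G H g) (rcosets H) (rcosets H)"
    by (rule bij_betw_byWitness[where f' = "coset_action G H (inv g)"])
       (use assms coset_action_closed in \<open>auto simp: coset_action_mult[symmetric] coset_action_one\<close>)
  then show ?thesis by (simp add: Bij_def coset_action_def)
qed

lemma (in group) coset_action_hom:
  assumes "subgroup H G"
  shows "coset_action G H \<in> hom G (BijGroup (rcosets H))"
proof (rule homI)
  fix g k assume gk: "g \<in> carrier G" "k \<in> carrier G"
  have "coset_action G H (g \<otimes> k) = (\<lambda>D \<in> rcosets H. coset_action G H g (coset_action G H k D))"
  proof
    fix D show "coset_action G H (g \<otimes> k) D = (\<lambda>D \<in> rcosets H. coset_action G H g (coset_action G H k D)) D"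
      using assms gk by (cases "D \<in> rcosets H") (simp add: coset_action_mult, simp add: coset_action_def)
  qed
  then show "coset_action G H (g \<otimes> k) = coset_action G H g \<otimes>\<^bsub>BijGroup (rcosets H)\<^esub> coset_action G H k"
    using assms gk by (simp add: BijGroup_def coset_action_Bij compose_def)
qed (simp add: BijGroup_def coset_action_Bij assms)

definition normal_core :: "('a, 'b) monoid_scheme \<Rightarrow> 'a set \<Rightarrow> 'a set" where
  "normal_core G H = kernel G (BijGroup (rcosets\<^bsub>G\<^esub> H)) (coset_action G H)"

lemma (in group) group_hom_coset_action:
  "subgroup H G \<Longrightarrow> group_hom G (BijGroup (rcosets H)) (coset_action G H)"
  by (simp add: group_hom_def group_hom_axioms_def group_BijGroup is_group coset_action_hom)

lemma (in group) normal_core_normal: "subgroup H G \<Longrightarrow> normal_core G H \<lhd> G"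
  unfolding normal_core_def by (rule group_hom.normal_kernel[OF group_hom_coset_action])

lemma (in group) normal_core_subset:
  assumes "subgroup H G"
  shows "normal_core G H \<subseteq> H"
proof
  fix g assume "g \<in> normal_core G H"
  then have g: "g \<in> carrier G" and "coset_action G H g = (\<lambda>D \<in> rcosets H. D)"
    by (simp_all add: normal_core_def kernel_def BijGroup_def)
  moreover have H: "H \<in> rcosets H"
    using assms by (metis coset_mult_one one_closed rcosetsI subgroup.subset)
  ultimately have "H #> inv g = H" by (metis coset_action_def restrict_apply')
  then have "inv g \<in> H"
    using assms g by (metis inv_closed rcos_self)
  then show "g \<in> H" using assms g by (metis inv_inv subgroup.m_inv_closed)
qed

lemma (in group_hom) finite_rcosets_kernel:
  assumes "finite (carrier H)"
  shows "finite (rcosets\<^bsub>G\<^esub> kernel G H h)"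
proof -
  have "inj_on (\<lambda>C. the_elem (h ` C)) (carrier (G Mod kernel G H h))"
    by (rule FactGroup_inj_on)
  moreover have "(\<lambda>C. the_elem (h ` C)) ` carrier (G Mod kernel G H h) \<subseteq> carrier H"
    using FactGroup_the_elem_mem by blast
  ultimately show ?thesis
    using assms by (metis FactGroup_def inj_on_finite partial_object.select_convs(1))
qed

lemma (in group) finite_rcosets_normal_core:
  assumes "subgroup H G" "finite (rcosets H)"
  shows "finite (rcosets normal_core G H)"
  unfolding normal_core_def using assms
  by (intro group_hom.finite_rcosets_kernel group_hom_coset_action) (simp_all add: BijGroup_def finite_Bij)

lemma rcosets_restrict_iff:
  "C \<in> rcosets\<^bsub>G\<lparr>carrier := H\<rparr>\<^esub> N \<longleftrightarrow> (\<exists>h \<in> H. C = N #>\<^bsub>G\<^esub> h)"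
  by (auto simp: RCOSETS_def r_coset_def)

lemma (in group) rcosets_subgroup_subset:
  assumes "H \<subseteq> carrier G"
  shows "rcosets\<^bsub>G\<lparr>carrier := H\<rparr>\<^esub> N \<subseteq> rcosets N"
proof
  fix C assume "C \<in> rcosets\<^bsub>G\<lparr>carrier := H\<rparr>\<^esub> N"
  then show "C \<in> rcosets N" using assms unfolding rcosets_restrict_iff by (auto simp: RCOSETS_def)
qed

lemma (in group) rcosets_in_rcoset:
  assumes H: "subgroup H G" and N: "subgroup N G" and NH: "N \<subseteq> H" and a: "a \<in> carrier G"
  shows "{C \<in> rcosets N. C \<subseteq> H #> a} = (\<lambda>C. C #> a) ` (rcosets\<^bsub>G\<lparr>carrier := H\<rparr>\<^esub> N)"
proof (intro equalityI subsetI)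
  fix C assume "C \<in> {C \<in> rcosets N. C \<subseteq> H #> a}"
  then obtain g where g: "g \<in> carrier G" "C = N #> g" and CH: "C \<subseteq> H #> a"
    unfolding RCOSETS_def by auto
  have "g \<in> H #> a" using CH g rcos_self[OF _ N] by blast
  then obtain h where h: "h \<in> H" "g = h \<otimes> a" unfolding r_coset_def by blast
  then have "C = (N #> h) #> a"
    using g a H N by (simp add: coset_mult_assoc subgroup.subset subgroup.mem_carrier)
  moreover have "N #> h \<in> rcosets\<^bsub>G\<lparr>carrier := H\<rparr>\<^esub> N"
    unfolding rcosets_restrict_iff using h(1) by blast
  ultimately show "C \<in> (\<lambda>C. C #> a) ` (rcosets\<^bsub>G\<lparr>carrier := H\<rparr>\<^esub> N)" by (rule image_eqI)
next
  fix C assume "C \<in> (\<lambda>C. C #> a) ` (rcosets\<^bsub>G\<lparr>carrier := H\<rparr>\<^esub> N)"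
  then obtain C' where C': "C' \<in> rcosets\<^bsub>G\<lparr>carrier := H\<rparr>\<^esub> N" and C: "C = C' #> a" by blast
  obtain h where h: "h \<in> H" and "C' = N #> h" using C' unfolding rcosets_restrict_iff by blast
  have hG: "h \<in> carrier G" using subgroup.mem_carrier[OF H h] .
  have "C = N #> (h \<otimes> a)"
    using C \<open>C' = N #> h\<close> hG a N by (simp add: coset_mult_assoc subgroup.subset)
  moreover have "N #> (h \<otimes> a) \<subseteq> H #> (h \<otimes> a)" using NH unfolding r_coset_def by blast
  moreover have "H #> (h \<otimes> a) = (H #> h) #> a"
    using H hG a by (simp add: coset_mult_assoc subgroup.subset)
  moreover have "H #> h = H" using subgroup.rcos_const[OF H is_group h] .
  moreover have "N #> (h \<otimes> a) \<in> rcosets N"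
    using hG a N by (simp add: rcosetsI subgroup.subset)
  ultimately show "C \<in> {C \<in> rcosets N. C \<subseteq> H #> a}" by simp
qed

lemma (in group) inj_on_rcoset: "a \<in> carrier G \<Longrightarrow> inj_on (\<lambda>C. C #> a) (Pow (carrier G))"
proof (rule inj_onI)
  fix C C' assume a: "a \<in> carrier G" and C: "C \<in> Pow (carrier G)" "C' \<in> Pow (carrier G)"
    and eq: "C #> a = C' #> a"
  have "C = C #> a #> inv a" using a C by (simp add: coset_mult_assoc)
  also have "\<dots> = C' #> a #> inv a" using eq by simp
  also have "\<dots> = C'" using a C by (simp add: coset_mult_assoc)
  finally show "C = C'" .
qed

text \<open>Each coset of \<open>N\<close> lies in exactly one coset \<open>H a\<close>, and those lying in \<open>H a\<close> are the
translates by \<open>a\<close> of the cosets of \<open>N\<close> in \<open>H\<close>.\<close>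

lemma (in group) card_rcosets_tower:
  assumes H: "subgroup H G" and N: "subgroup N G" and NH: "N \<subseteq> H"
    and fin: "finite (rcosets H)" "finite (rcosets\<^bsub>G\<lparr>carrier := H\<rparr>\<^esub> N)"
  shows "card (rcosets N) = card (rcosets H) * card (rcosets\<^bsub>G\<lparr>carrier := H\<rparr>\<^esub> N)"
proof -
  define K where "K = rcosets\<^bsub>G\<lparr>carrier := H\<rparr>\<^esub> N"
  define fibre where "fibre D = {C \<in> rcosets N. C \<subseteq> D}" for D
  have cover: "rcosets N = (\<Union>D \<in> rcosets H. fibre D)"
  proof (intro equalityI subsetI)
    fix C assume "C \<in> rcosets N"
    then obtain g where g: "g \<in> carrier G" "C = N #> g" unfolding RCOSETS_def by auto
    have "C \<subseteq> H #> g" using g NH unfolding r_coset_def by blast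
    moreover have "H #> g \<in> rcosets H" by (rule rcosetsI[OF subgroup.subset[OF H] g(1)])
    ultimately show "C \<in> (\<Union>D \<in> rcosets H. fibre D)"
      using \<open>C \<in> rcosets N\<close> unfolding fibre_def by blast
  qed (auto simp: fibre_def)
  have fibre_translate: "\<exists>a. fibre D = (\<lambda>C. C #> a) ` K \<and> inj_on (\<lambda>C. C #> a) K"
    if D: "D \<in> rcosets H" for D
  proof -
    obtain a where a: "a \<in> carrier G" "D = H #> a" using D unfolding RCOSETS_def by auto
    have "K \<subseteq> Pow (carrier G)"
      using H N by (auto simp: K_def RCOSETS_def r_coset_def subgroup.mem_carrier)
    then have "inj_on (\<lambda>C. C #> a) K"
      using inj_on_rcoset[OF a(1)] by (rule inj_on_subset[rotated])
    then show ?thesis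
      unfolding fibre_def a(2) K_def rcosets_in_rcoset[OF H N NH a(1)] by (intro exI[of _ a] conjI refl)
  qed
  have fibre_finite: "finite (fibre D)" and fibre_card: "card (fibre D) = card K"
    if D: "D \<in> rcosets H" for D
  proof -
    obtain a where "fibre D = (\<lambda>C. C #> a) ` K" "inj_on (\<lambda>C. C #> a) K"
      using fibre_translate[OF D] by blast
    then show "finite (fibre D)" "card (fibre D) = card K"
      using fin(2) by (simp_all add: K_def card_image)
  qed
  have fibre_disjoint: "fibre D1 \<inter> fibre D2 = {}"
    if D: "D1 \<in> rcosets H" "D2 \<in> rcosets H" "D1 \<noteq> D2" for D1 D2
  proof -
    have "D1 \<inter> D2 = {}" using rcos_disjoint[OF H] D unfolding pairwise_def disjnt_def by blast
    moreover have "C \<noteq> {}" if "C \<in> rcosets N" for C using subgroup.rcosets_non_empty[OF N that] .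
    ultimately show ?thesis unfolding fibre_def by blast
  qed
  have "card (rcosets N) = (\<Sum>D \<in> rcosets H. card (fibre D))"
    unfolding cover using fin(1) fibre_finite fibre_disjoint by (intro card_UN_disjoint) auto
  also have "\<dots> = card (rcosets H) * card K"
    using fibre_card by simp
  finally show ?thesis unfolding K_def .
qed

lemma fin_index_normal_normal_core:
  "group G \<Longrightarrow> fin_index_subgroup H G \<Longrightarrow> fin_index_normal (normal_core G H) G"
  by (simp add: fin_index_subgroup_def fin_index_normal_def group.normal_core_normal
      group.finite_rcosets_normal_core)

lemma fin_index_normal_normal_core_restrict:
  fixes G :: "'a monoid" (structure)
  assumes "group G" "fin_index_subgroup H G"
  shows "fin_index_normal (normal_core G H) (G\<lparr>carrier := H\<rparr>)"
proof -
  interpret group G by fact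
  have H: "subgroup H G" and fin: "finite (rcosets H)"
    using assms by (simp_all add: fin_index_subgroup_def)
  have "finite (rcosets\<^bsub>G\<lparr>carrier := H\<rparr>\<^esub> normal_core G H)"
    using finite_rcosets_normal_core[OF H fin] rcosets_subgroup_subset[OF subgroup.subset[OF H]]
    by (rule finite_subset[rotated])
  then show ?thesis
    unfolding fin_index_normal_def
    using normal_restrict_supergroup[OF H normal_core_normal[OF H] normal_core_subset[OF H]] by simp
qed

lemma group_index_tower:
  fixes G :: "'a monoid" (structure)
  assumes "group G" "fin_index_subgroup H G" "fin_index_subgroup N (G\<lparr>carrier := H\<rparr>)"
  shows "group_index G N = group_index G H * group_index (G\<lparr>carrier := H\<rparr>) N"
proof -
  interpret group G by fact
  have H: "subgroup H G" "finite (rcosets H)"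
    and N: "subgroup N (G\<lparr>carrier := H\<rparr>)" "finite (rcosets\<^bsub>G\<lparr>carrier := H\<rparr>\<^esub> N)"
    using assms by (simp_all add: fin_index_subgroup_def)
  have "N \<subseteq> H" using subgroup.subset[OF N(1)] by simp
  then show ?thesis
    unfolding group_index_def by (rule card_rcosets_tower[OF H(1) incl_subgroup[OF H(1) N(1)] _ H(2) N(2)])
qed

lemma normal_core_index_ratio_le:
  assumes G: "group G" and "closed_fin_index L" "L G" and I: "submult_fin_index_normal L I"
    and H: "fin_index_subgroup H G"
  shows "I (G\<lparr>carrier := normal_core G H\<rparr>) / real (group_index G (normal_core G H))
    \<le> I (G\<lparr>carrier := H\<rparr>) / real (group_index G H)"
proof -
  define N where "N = normal_core G H"
  have "L (G\<lparr>carrier := H\<rparr>)" using assms(2,3) H unfolding closed_fin_index_def by blast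
  moreover have NH: "fin_index_normal N (G\<lparr>carrier := H\<rparr>)"
    unfolding N_def using G H by (rule fin_index_normal_normal_core_restrict)
  ultimately have "I ((G\<lparr>carrier := H\<rparr>)\<lparr>carrier := N\<rparr>) / real (group_index (G\<lparr>carrier := H\<rparr>) N)
      \<le> I (G\<lparr>carrier := H\<rparr>)"
    using I unfolding submult_fin_index_normal_def by blast
  then have "I (G\<lparr>carrier := N\<rparr>) / real (group_index (G\<lparr>carrier := H\<rparr>) N) / real (group_index G H)
      \<le> I (G\<lparr>carrier := H\<rparr>) / real (group_index G H)"
    by (intro divide_right_mono) simp_all
  moreover have "fin_index_subgroup N (G\<lparr>carrier := H\<rparr>)"
    using NH normal_imp_subgroup unfolding fin_index_normal_def fin_index_subgroup_def by blast
  then have "group_index G N = group_index G H * group_index (G\<lparr>carrier := H\<rparr>) N"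
    by (rule group_index_tower[OF G H])
  then have "real (group_index G N) = real (group_index (G\<lparr>carrier := H\<rparr>) N) * real (group_index G H)"
    by simp
  ultimately have "I (G\<lparr>carrier := N\<rparr>) / real (group_index G N) \<le> I (G\<lparr>carrier := H\<rparr>) / real (group_index G H)"
    by (simp only: divide_divide_eq_left)
  then show ?thesis by (simp only: N_def)
qed

lemma I_tilde_eq_J_tilde:
  assumes "group G" "closed_fin_index L" "L G" "submult_fin_index_normal L I"
  shows "I_tilde I G = J_tilde I G"
proof (rule antisym)
  show "I_tilde I G \<le> J_tilde I G" unfolding I_tilde_def J_tilde_def
    by (rule INF_superset_mono)
      (auto simp: fin_index_normal_def fin_index_subgroup_def normal_imp_subgroup)
  show "J_tilde I G \<le> I_tilde I G" unfolding I_tilde_def J_tilde_def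
  proof (rule INF_mono)
    fix H assume "H \<in> {H. fin_index_subgroup H G}"
    then have H: "fin_index_subgroup H G" by simp
    show "\<exists>N \<in> {N. fin_index_normal N G}. ereal (I (G\<lparr>carrier := N\<rparr>) / real (group_index G N))
        \<le> ereal (I (G\<lparr>carrier := H\<rparr>) / real (group_index G H))"
    proof
      show "normal_core G H \<in> {N. fin_index_normal N G}"
        using fin_index_normal_normal_core[OF assms(1) H] by simp
    qed (simp add: normal_core_index_ratio_le[OF assms H])
  qed
qed

lemma submult_fin_index_imp_normal: "submult_fin_index L I \<Longrightarrow> submult_fin_index_normal L I"
  unfolding submult_fin_index_def submult_fin_index_normal_def fin_index_normal_def
    fin_index_subgroup_def
  by (auto simp: normal_imp_subgroup)

theorem mainTheorem1:
  fixes L :: "'a monoid \<Rightarrow> bool" and I :: "'a monoid \<Rightarrow> real" and G :: "'a monoid"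
  assumes "class_of_groups L"
    and "closed_fin_index L"
    and "is_invariant L I"
    and "L G"
  shows "(submult_fin_index L I \<longrightarrow> I_tilde I G = J_tilde I G)
       \<and> (submult_fin_index_normal L I \<longrightarrow> I_tilde I G = J_tilde I G)"
proof -
  have "group G" using assms(1,4) unfolding class_of_groups_def by blast
  then show ?thesis
    using I_tilde_eq_J_tilde[OF _ assms(2,4)] submult_fin_index_imp_normal by blast
qed

end
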